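(* Assume (A4). Let $\beta>0$, $p\in(0,2]$, $t_0>0$, and let $w:[t_0,\infty)\to\mathbb R^m$ be continuous with $w(t)\to w^*\in\mathbb R^m$ as $t\to\infty$. For $t\ge t_0$ let $$z(t):=\operatorname{argmin}_{z\in\mathcal H}\ \max_{i=1,\dots,m}\big(f_i(z)-w_i(t)\big)+\frac{\beta}{2t^p}\|z\|^2$$ (unique minimizer). Then $z(t)\to z_0(w^* )$ strongly as $t\to\infty$.
   Context: $\mathcal H$ is a real Hilbert space with norm $\|\cdot\|$; $f_1,\dots,f_m:\mathcal H\to\mathbb R$ are convex and continuously differentiable. For $w\in\mathbb R^m$, $S(w):=\operatorname{argmin}_{z\in\mathcal H}\max_{i}(f_i(z)-w_i)$ and $z_0(w):=\operatorname{proj}_{S(w)}(0)$, the element of minimal norm of $S(w)$. Assumption (A4): $S(w)\neq\emptyset$ for every $w\in\mathbb R^m$ and the map $w\mapsto z_0(w)$ is continuous on $\mathbb R^m$. *)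

theory Defs
  imports "HOL-Analysis.Analysis"
begin

text \<open>The index set {1..m} is a finite type 'm; weights w live in real^'m.
  The Hilbert space H is a type of class real_inner + complete_space.\<close>

definition maxobj :: "('m::finite \<Rightarrow> 'a \<Rightarrow> real) \<Rightarrow> real^'m \<Rightarrow> 'a \<Rightarrow> real" where
  "maxobj f w z = Max (range (\<lambda>i. f i z - w $ i))"

definition Sset :: "('m::finite \<Rightarrow> 'a \<Rightarrow> real) \<Rightarrow> real^'m \<Rightarrow> 'a set" where
  "Sset f w = {z. \<forall>y. maxobj f w z \<le> maxobj f w y}"

text \<open>z0(w) = proj_{S(w)}(0), the element of minimal norm of S(w).\<close>
definition z0 :: "('m::finite \<Rightarrow> 'a::real_normed_vector \<Rightarrow> real) \<Rightarrow> real^'m \<Rightarrow> 'a" where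
  "z0 f w = (SOME z. z \<in> Sset f w \<and> (\<forall>y\<in>Sset f w. norm z \<le> norm y))"

text \<open>Continuous differentiability, expressed via a continuous gradient (Riesz).\<close>
definition C1_fun :: "('a::real_inner \<Rightarrow> real) \<Rightarrow> bool" where
  "C1_fun g \<longleftrightarrow> (\<exists>G. (\<forall>x. (g has_derivative (\<lambda>h. G x \<bullet> h)) (at x)) \<and> continuous_on UNIV G)"

definition A4 :: "('m::finite \<Rightarrow> 'a::real_normed_vector \<Rightarrow> real) \<Rightarrow> bool" where
  "A4 f \<longleftrightarrow> (\<forall>w. Sset f w \<noteq> {}) \<and> continuous_on UNIV (z0 f)"

definition ztik :: "('m::finite \<Rightarrow> 'a::real_normed_vector \<Rightarrow> real) \<Rightarrow> real \<Rightarrow> real \<Rightarrow> (real \<Rightarrow> real^'m) \<Rightarrow> real \<Rightarrow> 'a" where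
  "ztik f \<beta> p w t = (THE z. \<forall>y. maxobj f (w t) z + \<beta> / (2 * t powr p) * (norm z)\<^sup>2
                                \<le> maxobj f (w t) y + \<beta> / (2 * t powr p) * (norm y)\<^sup>2)"

end

theory Submission
  imports Defs
begin

(* The regularized minimizer z(t) of phi_t + eps(t) |z|^2, where phi_t = max_i (f_i - w_i(t)),
   never has larger norm than the minimal-norm minimizer u(t) = z0(w(t)) of phi_t. Since phi_t is
   uniformly within |w(t) - wstar| of phi = max_i (f_i - wstar_i), z(t) is also an
   eta(t)-minimizer of phi with eta(t) -> 0, and by (A4) u(t) -> z0(wstar), so
   |z(t)|^2 <= |z0(wstar)|^2 + eta(t). Strong convergence then follows from a stability property
   of the minimal-norm minimizer of a convex continuous function on a Hilbert space:
   near-minimizers of almost minimal norm are close to it. By the parallelogram law the midpoint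
   of two near-minimizers is again a near-minimizer whose norm cannot drop below the infimal norm
   of near-minimizers, which forces the two points to be close; completeness gives existence of
   the minimal-norm minimizer and of z(t) along the way. *)

lemma norm_midpoint_sq:
  fixes a b :: "'a::real_inner"
  shows "(norm (midpoint a b))\<^sup>2 = ((norm a)\<^sup>2 + (norm b)\<^sup>2) / 2 - (norm (a - b))\<^sup>2 / 4"
  unfolding midpoint_def power2_norm_eq_inner
  by (simp add: inner_add_left inner_add_right inner_diff_left inner_diff_right inner_commute
      field_simps)

definition midpoint_convex :: "('a::real_vector \<Rightarrow> real) \<Rightarrow> bool" where
  "midpoint_convex F \<longleftrightarrow> (\<forall>a b. F (midpoint a b) \<le> (F a + F b) / 2)"

lemma convex_on_imp_midpoint_convex:
  assumes "convex_on UNIV F"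
  shows "midpoint_convex F"
  unfolding midpoint_convex_def
proof (intro allI)
  fix a b
  have "F ((1 - 1/2) *\<^sub>R a + (1/2) *\<^sub>R b) \<le> (1 - 1/2) * F a + (1/2) * F b"
    by (rule convex_onD[OF assms]) auto
  then show "F (midpoint a b) \<le> (F a + F b) / 2"
    by (simp add: midpoint_def scaleR_add_right)
qed

definition is_min_norm_minimizer :: "('a::real_normed_vector \<Rightarrow> real) \<Rightarrow> 'a \<Rightarrow> bool" where
  "is_min_norm_minimizer F x \<longleftrightarrow>
     (\<forall>y. F x \<le> F y) \<and> (\<forall>y. (\<forall>y'. F y \<le> F y') \<longrightarrow> norm x \<le> norm y)"

definition near_argmin :: "('a \<Rightarrow> real) \<Rightarrow> real \<Rightarrow> 'a set" where
  "near_argmin F \<eta> = {y. F y \<le> Inf (range F) + \<eta>}"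

definition near_argmin_norm_sq :: "('a::real_normed_vector \<Rightarrow> real) \<Rightarrow> real \<Rightarrow> real" where
  "near_argmin_norm_sq F \<eta> = (INF y \<in> near_argmin F \<eta>. (norm y)\<^sup>2)"

text \<open>The limit of \<open>near_argmin_norm_sq F \<eta>\<close> as \<open>\<eta> \<rightarrow> 0\<^sup>+\<close>; it is the squared norm of the
  minimal-norm minimizer, but is defined without knowing that one exists.\<close>
definition min_norm_sq :: "('a::real_normed_vector \<Rightarrow> real) \<Rightarrow> real" where
  "min_norm_sq F = (SUP \<eta> \<in> {0<..}. near_argmin_norm_sq F \<eta>)"

lemma near_argmin_mono: "\<eta> \<le> \<eta>' \<Longrightarrow> near_argmin F \<eta> \<subseteq> near_argmin F \<eta>'"
  by (auto simp: near_argmin_def)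

lemma near_argmin_nonempty:
  assumes "bdd_below (range F)" "\<eta> > 0"
  shows "near_argmin F \<eta> \<noteq> {}"
proof -
  have "Inf (range F) < Inf (range F) + \<eta>" using assms(2) by simp
  then obtain y where "F y < Inf (range F) + \<eta>"
    using cInf_less_iff[of "range F" "Inf (range F) + \<eta>"] assms(1) by auto
  then show ?thesis by (auto simp: near_argmin_def intro!: exI[of _ y])
qed

lemma argmin_in_near_argmin:
  assumes "\<forall>y. F x \<le> F y" "\<eta> \<ge> 0"
  shows "x \<in> near_argmin F \<eta>"
proof -
  have "Inf (range F) = F x" using assms(1) by (intro cInf_eq_minimum) auto
  then show ?thesis using assms(2) by (simp add: near_argmin_def)
qed

lemma midpoint_in_near_argmin:
  assumes "midpoint_convex F" "a \<in> near_argmin F \<eta>" "b \<in> near_argmin F \<eta>"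
  shows "midpoint a b \<in> near_argmin F \<eta>"
proof -
  have "F (midpoint a b) \<le> (F a + F b) / 2" using assms(1) by (simp add: midpoint_convex_def)
  then show ?thesis using assms(2,3) unfolding near_argmin_def mem_Collect_eq by argo
qed

lemma bdd_below_norm_sq: "bdd_below ((\<lambda>y. (norm y)\<^sup>2) ` A)"
  by (rule bdd_belowI2[where m = 0]) simp

lemma near_argmin_norm_sq_le:
  "y \<in> near_argmin F \<eta> \<Longrightarrow> near_argmin_norm_sq F \<eta> \<le> (norm y)\<^sup>2"
  unfolding near_argmin_norm_sq_def
  by (rule cINF_lower[OF bdd_below_norm_sq])

lemma near_argmin_norm_sq_antimono:
  assumes "bdd_below (range F)" "0 < \<eta>" "\<eta> \<le> \<eta>'"
  shows "near_argmin_norm_sq F \<eta>' \<le> near_argmin_norm_sq F \<eta>"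
  unfolding near_argmin_norm_sq_def
  by (rule cINF_superset_mono[OF near_argmin_nonempty[OF assms(1,2)] bdd_below_norm_sq
        near_argmin_mono[OF assms(3)]]) simp

lemma near_argmin_norm_sq_approx:
  assumes "bdd_below (range F)" "\<eta> > 0" "e > 0"
  shows "\<exists>y \<in> near_argmin F \<eta>. (norm y)\<^sup>2 < near_argmin_norm_sq F \<eta> + e"
  using cINF_less_iff[OF near_argmin_nonempty[OF assms(1,2)] bdd_below_norm_sq,
      of "near_argmin_norm_sq F \<eta> + e"] assms(3)
  unfolding near_argmin_norm_sq_def by auto

context
  fixes F :: "'a::{real_inner, complete_space} \<Rightarrow> real"
  assumes midpoint_convex: "midpoint_convex F"
    and bdd_below: "bdd_below (range F)"
    and bdd_above: "bdd_above (near_argmin_norm_sq F ` {0<..})"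
begin

lemma near_argmin_norm_sq_le_min_norm_sq: "\<eta> > 0 \<Longrightarrow> near_argmin_norm_sq F \<eta> \<le> min_norm_sq F"
  unfolding min_norm_sq_def by (rule cSUP_upper) (use bdd_above in auto)

lemma min_norm_sq_le_argmin_norm_sq:
  assumes "\<forall>y. F x \<le> F y"
  shows "min_norm_sq F \<le> (norm x)\<^sup>2"
  unfolding min_norm_sq_def
  by (rule cSUP_least) (simp_all add: near_argmin_norm_sq_le argmin_in_near_argmin[OF assms])

text \<open>Parallelogram law: the midpoint of two near-minimizers is again one, so its norm is bounded
  below by \<open>near_argmin_norm_sq\<close>, which is close to \<open>min_norm_sq F\<close> for small \<open>\<eta>\<close>.\<close>
lemma near_argmins_close:
  assumes "e > 0"
  shows "\<exists>\<eta>>0. \<forall>a \<in> near_argmin F \<eta>. \<forall>b \<in> near_argmin F \<eta>.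
           (norm a)\<^sup>2 \<le> min_norm_sq F + \<eta> \<longrightarrow> (norm b)\<^sup>2 \<le> min_norm_sq F + \<eta> \<longrightarrow> norm (a - b) < e"
proof -
  have "min_norm_sq F - e\<^sup>2 / 8 < min_norm_sq F" using assms by simp
  then obtain \<eta>\<^sub>1 where \<eta>\<^sub>1: "\<eta>\<^sub>1 > 0" "min_norm_sq F - e\<^sup>2 / 8 < near_argmin_norm_sq F \<eta>\<^sub>1"
    using less_cSUP_iff[of "{0<..}" "near_argmin_norm_sq F"] bdd_above
    unfolding min_norm_sq_def by auto
  define \<eta> where "\<eta> = min \<eta>\<^sub>1 (e\<^sup>2 / 8)"
  have "\<eta> > 0" "\<eta> \<le> \<eta>\<^sub>1" "\<eta> \<le> e\<^sup>2 / 8" using \<eta>\<^sub>1 assms by (simp_all add: \<eta>_def)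
  moreover have "norm (a - b) < e"
    if a: "a \<in> near_argmin F \<eta>" "(norm a)\<^sup>2 \<le> min_norm_sq F + \<eta>"
      and b: "b \<in> near_argmin F \<eta>" "(norm b)\<^sup>2 \<le> min_norm_sq F + \<eta>" for a b
  proof -
    have "near_argmin_norm_sq F \<eta>\<^sub>1 \<le> near_argmin_norm_sq F \<eta>"
      by (rule near_argmin_norm_sq_antimono[OF bdd_below \<open>\<eta> > 0\<close> \<open>\<eta> \<le> \<eta>\<^sub>1\<close>])
    also have "\<dots> \<le> (norm (midpoint a b))\<^sup>2"
      by (intro near_argmin_norm_sq_le midpoint_in_near_argmin[OF midpoint_convex a(1) b(1)])
    finally have "(norm (a - b))\<^sup>2 < e\<^sup>2"
      using norm_midpoint_sq[of a b] a(2) b(2) \<eta>\<^sub>1(2) \<open>\<eta> \<le> e\<^sup>2 / 8\<close> by argo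
    then show ?thesis using assms by (simp add: power_less_imp_less_base)
  qed
  ultimately show ?thesis by blast
qed

lemma min_norm_minimizer_exists:
  assumes cont: "continuous_on UNIV F"
  shows "\<exists>x. is_min_norm_minimizer F x \<and> (norm x)\<^sup>2 = min_norm_sq F"
proof -
  define \<eta> where "\<eta> n = 1 / real (Suc n)" for n
  have \<eta>_pos: "\<eta> n > 0" for n by (simp add: \<eta>_def)
  have \<eta>_lim: "\<eta> \<longlonglongrightarrow> 0" unfolding \<eta>_def by (rule LIMSEQ_Suc[OF lim_const_over_n])
  have "\<exists>y \<in> near_argmin F (\<eta> n). (norm y)\<^sup>2 < near_argmin_norm_sq F (\<eta> n) + \<eta> n" for n
    by (rule near_argmin_norm_sq_approx[OF bdd_below \<eta>_pos \<eta>_pos])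
  then obtain y where y: "\<And>n. y n \<in> near_argmin F (\<eta> n)"
    and y_norm: "\<And>n. (norm (y n))\<^sup>2 < near_argmin_norm_sq F (\<eta> n) + \<eta> n"
    by metis
  have y_norm': "(norm (y n))\<^sup>2 \<le> min_norm_sq F + \<eta> n" for n
    using y_norm[of n] near_argmin_norm_sq_le_min_norm_sq[OF \<eta>_pos[of n]] by linarith
  have "Cauchy y"
  proof (rule metric_CauchyI)
    fix e :: real assume "e > 0"
    then obtain \<delta> where \<delta>: "\<delta> > 0" and close: "\<forall>a \<in> near_argmin F \<delta>. \<forall>b \<in> near_argmin F \<delta>.
        (norm a)\<^sup>2 \<le> min_norm_sq F + \<delta> \<longrightarrow> (norm b)\<^sup>2 \<le> min_norm_sq F + \<delta> \<longrightarrow> norm (a - b) < e"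
      using near_argmins_close by blast
    have "eventually (\<lambda>n. \<eta> n < \<delta>) sequentially"
      using \<eta>_lim \<delta> by (simp add: order_tendsto_iff)
    then obtain N where N: "\<And>n. n \<ge> N \<Longrightarrow> \<eta> n < \<delta>" by (auto simp: eventually_sequentially)
    have tail: "y n \<in> near_argmin F \<delta> \<and> (norm (y n))\<^sup>2 \<le> min_norm_sq F + \<delta>" if "n \<ge> N" for n
      using y[of n] y_norm'[of n] near_argmin_mono[OF less_imp_le[OF N[OF that]], where F = F] N[OF that] by auto
    show "\<exists>N. \<forall>m\<ge>N. \<forall>n\<ge>N. dist (y m) (y n) < e"
      using close tail by (metis dist_norm)
  qed
  then obtain x where x: "y \<longlonglongrightarrow> x" using Cauchy_convergent_iff convergent_def by blast
  have "F x \<le> Inf (range F) + 0"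
  proof (rule LIMSEQ_le[OF continuous_on_tendsto_compose[OF cont x]])
    show "(\<lambda>n. Inf (range F) + \<eta> n) \<longlonglongrightarrow> Inf (range F) + 0" by (intro tendsto_intros \<eta>_lim)
    show "\<exists>N. \<forall>n\<ge>N. F (y n) \<le> Inf (range F) + \<eta> n" using y by (auto simp: near_argmin_def)
  qed simp_all
  then have x_min: "\<forall>y. F x \<le> F y"
    using cInf_lower[OF rangeI bdd_below] by (simp add: order_trans)
  have "(norm x)\<^sup>2 \<le> min_norm_sq F + 0"
  proof (rule LIMSEQ_le)
    show "(\<lambda>n. (norm (y n))\<^sup>2) \<longlonglongrightarrow> (norm x)\<^sup>2" by (intro tendsto_intros x)
    show "(\<lambda>n. min_norm_sq F + \<eta> n) \<longlonglongrightarrow> min_norm_sq F + 0" by (intro tendsto_intros \<eta>_lim)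
  qed (use y_norm' in auto)
  then have "(norm x)\<^sup>2 = min_norm_sq F"
    using min_norm_sq_le_argmin_norm_sq[OF x_min] by simp
  moreover have "norm x \<le> norm y'" if "\<forall>y''. F y' \<le> F y''" for y'
    using min_norm_sq_le_argmin_norm_sq[OF that] \<open>(norm x)\<^sup>2 \<le> min_norm_sq F + 0\<close>
    by (simp add: power2_le_imp_le)
  ultimately show ?thesis using x_min unfolding is_min_norm_minimizer_def by blast
qed

lemma min_norm_minimizer_norm_sq:
  assumes "continuous_on UNIV F" "is_min_norm_minimizer F x"
  shows "(norm x)\<^sup>2 = min_norm_sq F"
proof -
  obtain x' where x': "is_min_norm_minimizer F x'" "(norm x')\<^sup>2 = min_norm_sq F"
    using min_norm_minimizer_exists[OF assms(1)] by blast
  then have "norm x = norm x'" using assms(2) unfolding is_min_norm_minimizer_def by force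
  then show ?thesis using x'(2) by simp
qed

lemma min_norm_minimizer_stable:
  assumes "continuous_on UNIV F" "is_min_norm_minimizer F x" "e > 0"
  shows "\<exists>\<eta>>0. \<forall>z. F z \<le> F x + \<eta> \<longrightarrow> (norm z)\<^sup>2 \<le> (norm x)\<^sup>2 + \<eta> \<longrightarrow> norm (z - x) < e"
proof -
  have x_min: "\<forall>y. F x \<le> F y" using assms(2) by (simp add: is_min_norm_minimizer_def)
  then have inf: "Inf (range F) = F x" by (intro cInf_eq_minimum) auto
  obtain \<eta> where "\<eta> > 0" and close: "\<forall>a \<in> near_argmin F \<eta>. \<forall>b \<in> near_argmin F \<eta>.
      (norm a)\<^sup>2 \<le> min_norm_sq F + \<eta> \<longrightarrow> (norm b)\<^sup>2 \<le> min_norm_sq F + \<eta> \<longrightarrow> norm (a - b) < e"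
    using near_argmins_close[OF assms(3)] by blast
  moreover have "x \<in> near_argmin F \<eta>" using argmin_in_near_argmin[OF x_min] \<open>\<eta> > 0\<close> by simp
  ultimately show ?thesis
    using min_norm_minimizer_norm_sq[OF assms(1,2)] inf by (auto simp: near_argmin_def)
qed

end

lemma argmin_imp_bdd_near_argmin_norm_sq:
  assumes "\<forall>y. F x \<le> F y"
  shows "bdd_above (near_argmin_norm_sq F ` {0<..})"
  by (rule bdd_aboveI2[where M = "(norm x)\<^sup>2"])
    (simp add: near_argmin_norm_sq_le argmin_in_near_argmin[OF assms])

lemma argmin_imp_bdd_below: "\<forall>y. F x \<le> F y \<Longrightarrow> bdd_below (range F)"
  by (auto intro: bdd_belowI2)

lemma tikhonov_midpoint:
  fixes F :: "'a::real_inner \<Rightarrow> real"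
  assumes "midpoint_convex F"
  shows "F (midpoint a b) + c * (norm (midpoint a b))\<^sup>2
           \<le> (F a + c * (norm a)\<^sup>2 + (F b + c * (norm b)\<^sup>2)) / 2 - c / 4 * (norm (a - b))\<^sup>2"
proof -
  have "F (midpoint a b) \<le> (F a + F b) / 2" using assms by (simp add: midpoint_convex_def)
  moreover have "c * (norm (midpoint a b))\<^sup>2
      = c * ((norm a)\<^sup>2 + (norm b)\<^sup>2) / 2 - c / 4 * (norm (a - b))\<^sup>2"
    by (simp add: norm_midpoint_sq algebra_simps)
  ultimately show ?thesis by argo
qed

lemma tikhonov_unique_minimizer:
  fixes F :: "'a::{real_inner, complete_space} \<Rightarrow> real"
  assumes "midpoint_convex F" "continuous_on UNIV F" "bdd_below (range F)" "c > 0"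
  shows "\<exists>!z. \<forall>y. F z + c * (norm z)\<^sup>2 \<le> F y + c * (norm y)\<^sup>2"
proof -
  define G where "G y = F y + c * (norm y)\<^sup>2" for y
  have G_midpoint: "G (midpoint a b) \<le> (G a + G b) / 2 - c / 4 * (norm (a - b))\<^sup>2" for a b
    unfolding G_def by (rule tikhonov_midpoint[OF assms(1)])
  have "midpoint_convex G" unfolding midpoint_convex_def
  proof (intro allI)
    fix a b :: 'a
    have "0 \<le> c / 4 * (norm (a - b))\<^sup>2" using assms(4) by simp
    then show "G (midpoint a b) \<le> (G a + G b) / 2" using G_midpoint[of a b] by linarith
  qed
  have F_le_G: "Inf (range F) + c * (norm y)\<^sup>2 \<le> G y" for y
    using cInf_lower[OF rangeI assms(3)] by (simp add: G_def)
  have "Inf (range F) \<le> G y" for y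
  proof -
    have "0 \<le> c * (norm y)\<^sup>2" using assms(4) by simp
    then show ?thesis using F_le_G[of y] by linarith
  qed
  then have G_bdd_below: "bdd_below (range G)" by (intro bdd_belowI2)
  have "bdd_above (near_argmin_norm_sq G ` {0<..})"
  proof (rule bdd_aboveI2)
    fix \<eta> :: real assume "\<eta> \<in> {0<..}"
    then obtain y where y: "y \<in> near_argmin G (min \<eta> 1)"
      using near_argmin_nonempty[OF G_bdd_below, of "min \<eta> 1"] by auto
    then have "near_argmin_norm_sq G \<eta> \<le> (norm y)\<^sup>2"
      using near_argmin_mono[of "min \<eta> 1" \<eta> G] by (intro near_argmin_norm_sq_le) auto
    also have "\<dots> \<le> (Inf (range G) + 1 - Inf (range F)) / c"
    proof -
      have "G y \<le> Inf (range G) + 1" using y by (simp add: near_argmin_def)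
      then have "c * (norm y)\<^sup>2 \<le> Inf (range G) + 1 - Inf (range F)" using F_le_G[of y] by linarith
      then show ?thesis using assms(4) by (simp add: pos_le_divide_eq mult.commute)
    qed
    finally show "near_argmin_norm_sq G \<eta> \<le> (Inf (range G) + 1 - Inf (range F)) / c" .
  qed
  moreover have "continuous_on UNIV G" unfolding G_def by (intro continuous_intros assms(2))
  ultimately obtain z where z: "\<forall>y. G z \<le> G y"
    using min_norm_minimizer_exists[OF \<open>midpoint_convex G\<close> G_bdd_below]
    by (auto simp: is_min_norm_minimizer_def)
  moreover have "z' = z" if z': "\<forall>y. G z' \<le> G y" for z'
  proof -
    have "c / 4 * (norm (z' - z))\<^sup>2 \<le> 0"
      using G_midpoint[of z' z] z'[rule_format, of "midpoint z' z"] z[rule_format, of z']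
        z'[rule_format, of z] by argo
    then show ?thesis using assms(4) by (simp add: mult_le_0_iff)
  qed
  ultimately show ?thesis unfolding G_def by blast
qed

lemma tikhonov_minimizer_comparison:
  fixes \<phi> \<psi> :: "'a::real_normed_vector \<Rightarrow> real"
  assumes close: "\<forall>y. \<bar>\<phi> y - \<psi> y\<bar> \<le> d"
    and u: "\<forall>y. \<phi> u \<le> \<phi> y"
    and z: "\<forall>y. \<phi> z + \<epsilon> * (norm z)\<^sup>2 \<le> \<phi> y + \<epsilon> * (norm y)\<^sup>2" and "\<epsilon> > 0"
  shows "\<psi> z \<le> \<psi> x + 2 * d + \<epsilon> * (norm u)\<^sup>2" and "(norm z)\<^sup>2 \<le> (norm u)\<^sup>2"
proof -
  have "0 \<le> \<epsilon> * (norm z)\<^sup>2" using \<open>\<epsilon> > 0\<close> by simp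
  moreover have "\<psi> z \<le> \<phi> z + d" "\<phi> x \<le> \<psi> x + d"
    using close[rule_format, of z] close[rule_format, of x] by (simp_all add: abs_le_iff)
  ultimately show "\<psi> z \<le> \<psi> x + 2 * d + \<epsilon> * (norm u)\<^sup>2"
    using z[rule_format, of u] u[rule_format, of x] by linarith
  have "\<epsilon> * (norm z)\<^sup>2 \<le> \<epsilon> * (norm u)\<^sup>2" using z[rule_format, of u] u[rule_format, of z] by linarith
  then show "(norm z)\<^sup>2 \<le> (norm u)\<^sup>2" using \<open>\<epsilon> > 0\<close> by simp
qed

text \<open>The Tikhonov minimizers \<open>z t\<close> have norm at most \<open>norm (u t)\<close> and are near-minimizers
  of \<open>\<Psi>\<close>, so the stability of the minimal-norm minimizer \<open>x\<close> applies.\<close>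
lemma tikhonov_minimizers_tendsto:
  fixes \<Phi> :: "'b \<Rightarrow> 'a::{real_inner, complete_space} \<Rightarrow> real" and F :: "'b filter"
  assumes \<Psi>: "midpoint_convex \<Psi>" "continuous_on UNIV \<Psi>" "is_min_norm_minimizer \<Psi> x"
    and close: "\<forall>\<^sub>F t in F. \<forall>y. \<bar>\<Phi> t y - \<Psi> y\<bar> \<le> d t" "(d \<longlongrightarrow> 0) F"
    and u: "\<forall>\<^sub>F t in F. \<forall>y. \<Phi> t (u t) \<le> \<Phi> t y" "(u \<longlongrightarrow> x) F"
    and z: "\<forall>\<^sub>F t in F. \<epsilon> t > 0 \<and>
              (\<forall>y. \<Phi> t (z t) + \<epsilon> t * (norm (z t))\<^sup>2 \<le> \<Phi> t y + \<epsilon> t * (norm y)\<^sup>2)"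
      "(\<epsilon> \<longlongrightarrow> 0) F"
  shows "(z \<longlongrightarrow> x) F"
proof (rule tendstoI)
  fix e :: real assume "e > 0"
  have x_min: "\<forall>y. \<Psi> x \<le> \<Psi> y" using \<Psi>(3) by (simp add: is_min_norm_minimizer_def)
  obtain \<eta> where "\<eta> > 0"
    and stable: "\<And>z. \<Psi> z \<le> \<Psi> x + \<eta> \<Longrightarrow> (norm z)\<^sup>2 \<le> (norm x)\<^sup>2 + \<eta> \<Longrightarrow> norm (z - x) < e"
    using min_norm_minimizer_stable[OF \<Psi>(1) argmin_imp_bdd_below[OF x_min]
        argmin_imp_bdd_near_argmin_norm_sq[OF x_min] \<Psi>(2,3) \<open>e > 0\<close>] by blast
  have "((\<lambda>t. 2 * d t + \<epsilon> t * (norm (u t))\<^sup>2) \<longlongrightarrow> 2 * 0 + 0 * (norm x)\<^sup>2) F"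
    by (intro tendsto_intros close(2) u(2) z(2))
  then have small: "\<forall>\<^sub>F t in F. 2 * d t + \<epsilon> t * (norm (u t))\<^sup>2 < \<eta>"
    using \<open>\<eta> > 0\<close> by (simp add: order_tendsto_iff)
  have "((\<lambda>t. (norm (u t))\<^sup>2) \<longlongrightarrow> (norm x)\<^sup>2) F" by (intro tendsto_intros u(2))
  then have u_norm: "\<forall>\<^sub>F t in F. (norm (u t))\<^sup>2 < (norm x)\<^sup>2 + \<eta>"
    using \<open>\<eta> > 0\<close> by (simp add: order_tendsto_iff)
  show "\<forall>\<^sub>F t in F. dist (z t) x < e"
    using small u_norm close(1) u(1) z(1)
  proof eventually_elim
    case (elim t)
    then have "\<epsilon> t > 0"
      and z_min: "\<forall>y. \<Phi> t (z t) + \<epsilon> t * (norm (z t))\<^sup>2 \<le> \<Phi> t y + \<epsilon> t * (norm y)\<^sup>2"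
      by auto
    note comparison = tikhonov_minimizer_comparison[OF elim(3,4) z_min \<open>\<epsilon> t > 0\<close>]
    have "\<Psi> (z t) \<le> \<Psi> x + \<eta>" using comparison(1)[of x] elim(1) by linarith
    moreover have "(norm (z t))\<^sup>2 \<le> (norm x)\<^sup>2 + \<eta>" using comparison(2) elim(2) by linarith
    ultimately show ?case using stable by (simp add: dist_norm)
  qed
qed

lemma tendsto_Max:
  fixes g :: "'i \<Rightarrow> 'b \<Rightarrow> 'c::linorder_topology"
  assumes "finite I" "I \<noteq> {}" "\<And>i. i \<in> I \<Longrightarrow> (g i \<longlongrightarrow> l i) F"
  shows "((\<lambda>x. Max ((\<lambda>i. g i x) ` I)) \<longlongrightarrow> Max (l ` I)) F"
  using assms by (induction I rule: finite_ne_induct) (auto intro!: tendsto_max)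

lemma maxobj_ge: "f i z - w $ i \<le> maxobj f w z"
  unfolding maxobj_def by (rule Max_ge) auto

lemma maxobj_attained: "\<exists>i. maxobj f w z = f i z - w $ i"
proof -
  have "maxobj f w z \<in> range (\<lambda>i. f i z - w $ i)" unfolding maxobj_def by (rule Max_in) auto
  then show ?thesis by auto
qed

lemma maxobj_le_maxobj_add_norm: "maxobj f w z \<le> maxobj f v z + norm (w - v)"
proof -
  obtain i where i: "maxobj f w z = f i z - w $ i" using maxobj_attained[of f w z] by blast
  have "\<bar>(w - v) $ i\<bar> \<le> norm (w - v)" by (rule component_le_norm_cart)
  then show ?thesis using i maxobj_ge[of f i z v] by auto
qed

lemma abs_maxobj_diff_le: "\<bar>maxobj f w z - maxobj f v z\<bar> \<le> norm (w - v)"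
  using maxobj_le_maxobj_add_norm[of f w z v] maxobj_le_maxobj_add_norm[of f v z w]
  by (simp add: norm_minus_commute abs_le_iff)

lemma midpoint_convex_maxobj:
  assumes "\<And>i. midpoint_convex (f i)"
  shows "midpoint_convex (maxobj f w)"
  unfolding midpoint_convex_def
proof (intro allI)
  fix a b
  obtain i where i: "maxobj f w (midpoint a b) = f i (midpoint a b) - w $ i"
    using maxobj_attained[of f w "midpoint a b"] by blast
  have "f i (midpoint a b) \<le> (f i a + f i b) / 2" using assms by (simp add: midpoint_convex_def)
  then show "maxobj f w (midpoint a b) \<le> (maxobj f w a + maxobj f w b) / 2"
    using i maxobj_ge[of f i a w] maxobj_ge[of f i b w] by argo
qed

lemma continuous_on_maxobj:
  assumes "\<And>i. continuous_on UNIV (f i)"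
  shows "continuous_on UNIV (maxobj f w)"
  unfolding continuous_on_def maxobj_def
proof
  fix z
  have "((\<lambda>y. f i y - w $ i) \<longlongrightarrow> f i z - w $ i) (at z within UNIV)" for i
    using assms[of i] by (intro tendsto_intros) (simp add: continuous_on_def)
  then show "((\<lambda>y. Max (range (\<lambda>i. f i y - w $ i))) \<longlongrightarrow> Max (range (\<lambda>i. f i z - w $ i)))
      (at z within UNIV)"
    by (intro tendsto_Max) auto
qed

lemma C1_fun_continuous: "C1_fun g \<Longrightarrow> continuous_on UNIV g"
  unfolding C1_fun_def
  by (metis continuous_at_imp_continuous_on has_derivative_continuous)

lemma is_min_norm_minimizer_maxobj_iff:
  "is_min_norm_minimizer (maxobj f v) x \<longleftrightarrow> x \<in> Sset f v \<and> (\<forall>y \<in> Sset f v. norm x \<le> norm y)"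
  by (simp add: is_min_norm_minimizer_def Sset_def)

lemma z0_is_min_norm_minimizer:
  fixes f :: "'m::finite \<Rightarrow> 'a::{real_inner, complete_space} \<Rightarrow> real"
  assumes "A4 f" "\<And>i. midpoint_convex (f i)" "\<And>i. continuous_on UNIV (f i)"
  shows "is_min_norm_minimizer (maxobj f v) (z0 f v)"
proof -
  obtain x0 where x0: "\<forall>y. maxobj f v x0 \<le> maxobj f v y"
    using assms(1) unfolding A4_def Sset_def by blast
  then have "\<exists>x. is_min_norm_minimizer (maxobj f v) x"
    using min_norm_minimizer_exists[OF midpoint_convex_maxobj[OF assms(2)]
        argmin_imp_bdd_below[OF x0] argmin_imp_bdd_near_argmin_norm_sq[OF x0]
        continuous_on_maxobj[OF assms(3)]] by blast
  then show ?thesis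
    unfolding is_min_norm_minimizer_maxobj_iff z0_def by (rule someI_ex)
qed

lemma ztik_minimizer:
  fixes f :: "'m::finite \<Rightarrow> 'a::{real_inner, complete_space} \<Rightarrow> real"
    and \<beta> p t :: real
  assumes "A4 f" "\<And>i. midpoint_convex (f i)" "\<And>i. continuous_on UNIV (f i)" "\<beta> > 0" "t > 0"
  defines "\<epsilon> \<equiv> \<beta> / (2 * t powr p)"
  shows "\<forall>y. maxobj f (w t) (ztik f \<beta> p w t) + \<epsilon> * (norm (ztik f \<beta> p w t))\<^sup>2
               \<le> maxobj f (w t) y + \<epsilon> * (norm y)\<^sup>2"
proof -
  have "\<forall>y. maxobj f (w t) (z0 f (w t)) \<le> maxobj f (w t) y"
    using z0_is_min_norm_minimizer[OF assms(1-3)] by (simp add: is_min_norm_minimizer_def)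
  then have "bdd_below (range (maxobj f (w t)))" by (rule argmin_imp_bdd_below)
  moreover have "\<epsilon> > 0" using assms(4,5) by (simp add: \<epsilon>_def)
  ultimately have "\<exists>!z. \<forall>y. maxobj f (w t) z + \<epsilon> * (norm z)\<^sup>2 \<le> maxobj f (w t) y + \<epsilon> * (norm y)\<^sup>2"
    by (intro tikhonov_unique_minimizer midpoint_convex_maxobj[OF assms(2)]
        continuous_on_maxobj[OF assms(3)])
  then show ?thesis unfolding ztik_def \<epsilon>_def by (rule theI')
qed

lemma tendsto_const_div_powr_at_top:
  fixes p c :: real
  assumes "p > 0"
  shows "((\<lambda>t. c / t powr p) \<longlongrightarrow> 0) at_top"
proof -
  have "((\<lambda>t. t powr - p) \<longlongrightarrow> 0) at_top"
    using assms by (intro tendsto_neg_powr filterlim_ident) simp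
  then have "((\<lambda>t. c * t powr - p) \<longlongrightarrow> c * 0) at_top" by (rule tendsto_mult_left)
  then show ?thesis by (simp add: powr_minus divide_inverse)
qed

theorem mainTheorem5:
  fixes f :: "'m::finite \<Rightarrow> 'a::{real_inner, complete_space} \<Rightarrow> real"
    and \<beta> p t0 :: real
    and w :: "real \<Rightarrow> real^'m"
    and wstar :: "real^'m"
  assumes convex: "\<And>i. convex_on UNIV (f i)"
    and C1: "\<And>i. C1_fun (f i)"
    and A4: "A4 f"
    and beta: "\<beta> > 0"
    and p: "0 < p" "p \<le> 2"
    and t0: "t0 > 0"
    and wcont: "continuous_on {t0..} w"
    and wlim: "(w \<longlongrightarrow> wstar) at_top"
  shows "((\<lambda>t. ztik f \<beta> p w t) \<longlongrightarrow> z0 f wstar) at_top"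
proof -
  have cont: "continuous_on UNIV (f i)" for i using C1 by (rule C1_fun_continuous)
  have mc: "midpoint_convex (f i)" for i using convex by (rule convex_on_imp_midpoint_convex)
  note z0_min = z0_is_min_norm_minimizer[OF A4 mc cont]
  show ?thesis
  proof (rule tikhonov_minimizers_tendsto[where \<Phi> = "\<lambda>t. maxobj f (w t)"
        and d = "\<lambda>t. norm (w t - wstar)" and u = "\<lambda>t. z0 f (w t)" and \<epsilon> = "\<lambda>t. \<beta> / (2 * t powr p)"])
    show "midpoint_convex (maxobj f wstar)" by (rule midpoint_convex_maxobj[OF mc])
    show "continuous_on UNIV (maxobj f wstar)" by (rule continuous_on_maxobj[OF cont])
    show "is_min_norm_minimizer (maxobj f wstar) (z0 f wstar)" by (rule z0_min)
    show "\<forall>\<^sub>F t in at_top. \<forall>y. \<bar>maxobj f (w t) y - maxobj f wstar y\<bar> \<le> norm (w t - wstar)"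
      by (simp add: abs_maxobj_diff_le)
    show "((\<lambda>t. norm (w t - wstar)) \<longlongrightarrow> 0) at_top"
      using wlim by (intro tendsto_norm_zero LIM_zero)
    show "\<forall>\<^sub>F t in at_top. \<forall>y. maxobj f (w t) (z0 f (w t)) \<le> maxobj f (w t) y"
      using z0_min by (simp add: is_min_norm_minimizer_def)
    have "isCont (z0 f) wstar" using A4 by (simp add: A4_def continuous_on_eq_continuous_at)
    then show "((\<lambda>t. z0 f (w t)) \<longlongrightarrow> z0 f wstar) at_top" by (rule isCont_tendsto_compose[OF _ wlim])
    show "\<forall>\<^sub>F t in at_top. \<beta> / (2 * t powr p) > 0 \<and>
        (\<forall>y. maxobj f (w t) (ztik f \<beta> p w t) + \<beta> / (2 * t powr p) * (norm (ztik f \<beta> p w t))\<^sup>2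
              \<le> maxobj f (w t) y + \<beta> / (2 * t powr p) * (norm y)\<^sup>2)"
      using eventually_gt_at_top[of 0]
    proof eventually_elim
      case (elim t)
      then show ?case using beta ztik_minimizer[OF A4 mc cont beta elim] by simp
    qed
    show "((\<lambda>t. \<beta> / (2 * t powr p)) \<longlongrightarrow> 0) at_top"
      using tendsto_const_div_powr_at_top[OF p(1), of "\<beta> / 2"] by simp
  qed
qed

end
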